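(* For an integer $r\ge 5$, say that straights are the rarest hand type other than straight flushes (for deck size $r$) if $freq_r(\mathrm{ST}) < freq_r(h)$ for every $h\in\{\mathrm{HC},\mathrm{1P},\mathrm{2P},\mathrm{3X},\mathrm{FL},\mathrm{FH},\mathrm{4X}\}$. Then: (i) there exists $N$ such that for all $r\ge N$, straights are the rarest hand type other than straight flushes; and (ii) if $r\ge 5$ and straights are the rarest hand type other than straight flushes, then $r\ge 761$.
   Context: Fix an integer $r\ge 5$. The deck has $4r$ cards: each card has one of $4$ suits and one of $r$ ranks $1,\dots,r$, each (suit, rank) pair occurring exactly once; rank $r$ plays the role of the ace. Let $S_r$ be the set of $7$-card subsets of the deck. Hand types of a $5$-card set: HC (high card): every $5$-card set; 1P: two cards of equal rank; 2P: two cards of rank $a$ and two cards of a rank $b\ne a$, or four cards of one rank (four of a kind is considered to contain two pair); 3X: three cards of equal rank; ST (straight): the five ranks form one of the sets $\{k,k+1,k+2,k+3,k+4\}$ with $1\le k\le r-4$, or $\{r,1,2,3,4\}$ (ace low); FL (flush): all five cards of the same suit; FH (full house): three cards of rank $a$ and two cards of a rank $b\ne a$; 4X: four cards of equal rank; SF (straight flush): both a straight and a flush. Types are counted inclusively. For $s\in S_r$ write $h\in s$ if some $5$-card subset of $s$ is of type $h$, and set $freq_r(h)=|\{s\in S_r: h\in s\}|$. *)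

theory Defs
  imports Main
begin

text \<open>A card is a pair (suit, rank) with suit in {0..<4} and rank in {1..r};
  rank r plays the role of the ace.\<close>

type_synonym card = "nat \<times> nat"

definition deck :: "nat \<Rightarrow> card set" where
  "deck r = {0..<4} \<times> {1..r}"

definition seven_sets :: "nat \<Rightarrow> card set set" where
  "seven_sets r = {s. s \<subseteq> deck r \<and> card s = 7}"

datatype hand_type = HC | P1 | P2 | X3 | ST | FL | FH | X4 | SF

definition rank_count :: "card set \<Rightarrow> nat \<Rightarrow> nat" where
  "rank_count c a = card {x \<in> c. snd x = a}"

definition is_straight :: "nat \<Rightarrow> card set \<Rightarrow> bool" where
  "is_straight r c \<longleftrightarrow>
     (\<exists>k. 1 \<le> k \<and> k + 4 \<le> r \<and> snd ` c = {k..k+4}) \<or> snd ` c = {r, 1, 2, 3, 4}"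

definition is_flush :: "card set \<Rightarrow> bool" where
  "is_flush c \<longleftrightarrow> (\<exists>u. \<forall>x\<in>c. fst x = u)"

text \<open>Hand type of a 5-card set (types counted inclusively).\<close>
fun is_type :: "nat \<Rightarrow> hand_type \<Rightarrow> card set \<Rightarrow> bool" where
  "is_type r HC c = True"
| "is_type r P1 c = (\<exists>x\<in>c. \<exists>y\<in>c. x \<noteq> y \<and> snd x = snd y)"
| "is_type r P2 c = ((\<exists>a b. a \<noteq> b \<and> rank_count c a \<ge> 2 \<and> rank_count c b \<ge> 2)
                      \<or> (\<exists>a. rank_count c a \<ge> 4))"
| "is_type r X3 c = (\<exists>a. rank_count c a \<ge> 3)"
| "is_type r ST c = is_straight r c"
| "is_type r FL c = is_flush c"
| "is_type r FH c = (\<exists>a b. a \<noteq> b \<and> rank_count c a \<ge> 3 \<and> rank_count c b \<ge> 2)"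
| "is_type r X4 c = (\<exists>a. rank_count c a \<ge> 4)"
| "is_type r SF c = (is_straight r c \<and> is_flush c)"

definition contains_type :: "nat \<Rightarrow> hand_type \<Rightarrow> card set \<Rightarrow> bool" where
  "contains_type r h s \<longleftrightarrow> (\<exists>c. c \<subseteq> s \<and> card c = 5 \<and> is_type r h c)"

definition freq :: "nat \<Rightarrow> hand_type \<Rightarrow> nat" where
  "freq r h = card {s \<in> seven_sets r. contains_type r h s}"

definition straights_rarest :: "nat \<Rightarrow> bool" where
  "straights_rarest r \<longleftrightarrow> (\<forall>h \<in> {HC, P1, P2, X3, FL, FH, X4}. freq r ST < freq r h)"

end

theory Submission
  imports Defs Complex_Main "HOL-Library.FuncSet"
begin

text \<open>Four of a kind can be counted exactly, freq r X4 = r * (4r - 4 choose 3), which is quartic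
  in r. Every straight hand consists of five cards on one of the r - 3 windows of five consecutive
  ranks plus two further cards, so straights are only cubic in r; full houses and flushes grow at
  least like (r choose 4) and (r choose 5), and every full house is also a high card, pair, two pair
  and trips hand.

  For the bound 761, straights are counted from below by the hands that cover a window with at most
  two of its ranks doubled, contain no card of the rank just above the window, and fill the
  remaining places with cards of other ranks. Such a hand determines its window, because a second
  window would need either that rank or at least four further ranks. This lower bound is a
  polynomial in r which stays above freq r X4 up to r = 760.\<close>

lemma fact_mult_choose: "fact k * (n choose k) = (\<Prod>i<k. n - i)"
proof (induction k arbitrary: n)
  case 0
  then show ?case by simp
next
  case (Suc k)
  have "fact (Suc k) * (n choose Suc k) = fact k * (Suc k * (n choose Suc k))"
    by (simp add: algebra_simps)
  also have "\<dots> = n * (fact k * (n - 1 choose k))"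
    by (simp only: binomial_absorption) simp
  also have "\<dots> = (\<Prod>i<Suc k. n - i)"
    by (simp add: Suc.IH prod.lessThan_Suc_shift del: prod.lessThan_Suc)
  finally show ?case .
qed

lemma choose_two_eq: "2 * (n choose 2) = n * (n - 1)"
  and choose_three_eq: "6 * (n choose 3) = n * (n - 1) * (n - 2)"
  and choose_four_eq: "24 * (n choose 4) = n * (n - 1) * (n - 2) * (n - 3)"
  and choose_five_eq: "120 * (n choose 5) = n * (n - 1) * (n - 2) * (n - 3) * (n - 4)"
  using fact_mult_choose[of 2 n] fact_mult_choose[of 3 n] fact_mult_choose[of 4 n]
    fact_mult_choose[of 5 n]
  by (simp_all add: fact_numeral numeral_eq_Suc lessThan_Suc mult_ac)

lemma finite_deck [simp]: "finite (deck r)"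
  by (simp add: deck_def)

lemma card_deck: "card (deck r) = 4 * r"
  by (simp add: deck_def card_cartesian_product)

lemma finite_seven_sets: "finite (seven_sets r)"
  unfolding seven_sets_def by (rule finite_subset[of _ "Pow (deck r)"]) auto

lemma card_le_freq:
  assumes "inj_on f X" and "\<And>x. x \<in> X \<Longrightarrow> f x \<in> seven_sets r \<and> contains_type r h (f x)"
  shows "card X \<le> freq r h"
proof -
  have "card X = card (f ` X)"
    using assms(1) by (simp add: card_image)
  also have "\<dots> \<le> freq r h"
    unfolding freq_def using assms(2) finite_seven_sets by (intro card_mono) auto
  finally show ?thesis .
qed

lemma freq_le_card:
  assumes "finite X" and "\<And>s. s \<in> seven_sets r \<Longrightarrow> contains_type r h s \<Longrightarrow> s \<in> f ` X"
  shows "freq r h \<le> card X"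
  unfolding freq_def by (rule surj_card_le[OF assms(1)]) (use assms(2) in blast)

lemma freq_mono:
  assumes "\<And>c. is_type r h c \<Longrightarrow> is_type r h' c"
  shows "freq r h \<le> freq r h'"
  unfolding freq_def contains_type_def using assms finite_seven_sets
  by (intro card_mono) auto

section \<open>Four of a kind\<close>

definition quad :: "nat \<Rightarrow> card set" where
  "quad a = {0..<4} \<times> {a}"

lemma card_quad [simp]: "card (quad a) = 4"
  by (simp add: quad_def card_cartesian_product)

lemma finite_quad [simp]: "finite (quad a)"
  by (simp add: quad_def)

lemma contains_X4_iff:
  assumes "s \<subseteq> deck r" and "5 \<le> card s"
  shows "contains_type r X4 s \<longleftrightarrow> (\<exists>a. quad a \<subseteq> s)"
proof
  assume "contains_type r X4 s"
  then obtain c a where c: "c \<subseteq> s" "4 \<le> card {x \<in> c. snd x = a}"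
    unfolding contains_type_def by (auto simp: rank_count_def)
  have "{x \<in> c. snd x = a} \<subseteq> quad a"
    using c(1) assms(1) by (auto simp: deck_def quad_def)
  then have "{x \<in> c. snd x = a} = quad a"
    using c(2) by (intro card_seteq) auto
  then show "\<exists>a. quad a \<subseteq> s"
    using c(1) by blast
next
  assume "\<exists>a. quad a \<subseteq> s"
  then obtain a where a: "quad a \<subseteq> s" ..
  have "card (quad a) < card s"
    using assms(2) by simp
  then obtain e where e: "e \<in> s" "e \<notin> quad a"
    by (meson card_mono finite_quad not_le subsetI)
  let ?c = "insert e (quad a)"
  have "quad a \<subseteq> {x \<in> ?c. snd x = a}"
    by (auto simp: quad_def)
  from card_mono[OF _ this] have "4 \<le> rank_count ?c a"
    by (simp add: rank_count_def)
  moreover have "card ?c = 5" "?c \<subseteq> s"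
    using a e by auto
  ultimately show "contains_type r X4 s"
    unfolding contains_type_def by (intro exI[of _ ?c]) auto
qed

lemma inj_on_quad_Un:
  "inj_on (\<lambda>(a, E). quad a \<union> E) (SIGMA a:A. {E. E \<subseteq> B - quad a \<and> card E = 3})"
proof (rule inj_onI, clarsimp)
  fix a E a' E'
  assume E: "E \<subseteq> B - quad a" "card E = 3" and E': "E' \<subseteq> B - quad a'"
    and eq: "quad a \<union> E = quad a' \<union> E'"
  have "a = a'"
  proof (rule ccontr)
    assume "a \<noteq> a'"
    then have "quad a' \<subseteq> E"
      using eq by (auto simp: quad_def)
    then show False
      using E(2) card_mono[of E "quad a'"] card_ge_0_finite[of E] by simp
  qed
  then show "a = a' \<and> E = E'"
    using eq E(1) E'(1) by blast
qed

lemma freq_X4: "freq r X4 = r * (4 * r - 4 choose 3)"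
proof -
  let ?X = "SIGMA a:{1..r}. {E. E \<subseteq> deck r - quad a \<and> card E = 3}"
  let ?f = "\<lambda>(a, E). quad a \<union> E"
  have quad_deck: "quad a \<subseteq> deck r \<longleftrightarrow> a \<in> {1..r}" for a
    by (simp add: quad_def deck_def times_subset_iff)
  have "card ?X = r * (4 * r - 4 choose 3)"
    using quad_deck by (simp add: n_subsets card_Diff_subset card_deck)
  moreover have "freq r X4 \<le> card ?X"
  proof (rule freq_le_card)
    fix s assume s: "s \<in> seven_sets r" "contains_type r X4 s"
    then obtain a where a: "quad a \<subseteq> s"
      using contains_X4_iff[of s r] by (auto simp: seven_sets_def)
    then have "(a, s - quad a) \<in> ?X"
      using s(1) quad_deck[of a] by (auto simp: seven_sets_def card_Diff_subset)
    moreover have "s = ?f (a, s - quad a)"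
      using a by auto
    ultimately show "s \<in> ?f ` ?X"
      by blast
  qed simp
  moreover have "card ?X \<le> freq r X4"
  proof (rule card_le_freq)
    show "inj_on ?f ?X"
      by (rule inj_on_quad_Un)
  next
    fix x assume "x \<in> ?X"
    then obtain a E where x: "x = (a, E)" "a \<in> {1..r}" "E \<subseteq> deck r - quad a" "card E = 3"
      by auto
    have "finite E"
      using x(3) by (meson Diff_subset finite_deck finite_subset)
    then have "card (quad a \<union> E) = 7"
      using x by (subst card_Un_disjoint) auto
    moreover have "quad a \<union> E \<subseteq> deck r"
      using x quad_deck[of a] by auto
    ultimately
    show "?f x \<in> seven_sets r \<and> contains_type r X4 (?f x)"
      using x contains_X4_iff[of "quad a \<union> E" r] by (auto simp: seven_sets_def)
  qed
  ultimately show ?thesis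
    by simp
qed

section \<open>Straights\<close>

text \<open>Window 0 is the ace-low straight. For every k, the rank just above window r k is k + 5.\<close>
definition window :: "nat \<Rightarrow> nat \<Rightarrow> nat set" where
  "window r k = (if k = 0 then {r, 1, 2, 3, 4} else {k..k + 4})"

lemma is_straight_iff_window: "is_straight r c \<longleftrightarrow> (\<exists>k \<in> {0..r - 4}. snd ` c = window r k)"
proof
  assume "is_straight r c"
  then consider k where "1 \<le> k" "k + 4 \<le> r" "snd ` c = {k..k + 4}" | "snd ` c = {r, 1, 2, 3, 4}"
    unfolding is_straight_def by blast
  then show "\<exists>k \<in> {0..r - 4}. snd ` c = window r k"
  proof cases
    case (1 k)
    then show ?thesis
      by (intro bexI[of _ k]) (auto simp: window_def)
  qed (auto simp: window_def)
next
  assume "\<exists>k \<in> {0..r - 4}. snd ` c = window r k"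
  then obtain k where "k \<le> r - 4" "snd ` c = window r k"
    by auto
  then show "is_straight r c"
    unfolding is_straight_def window_def by (cases "k = 0") auto
qed

lemma finite_window [simp]: "finite (window r k)"
  by (simp add: window_def)

lemma card_window: "5 \<le> r \<Longrightarrow> card (window r k) = 5"
  by (simp add: window_def)

lemma window_subset: "5 \<le> r \<Longrightarrow> k \<le> r - 4 \<Longrightarrow> window r k \<subseteq> {1..r}"
  by (auto simp: window_def)

lemma freq_ST_le:
  assumes "5 \<le> r"
  shows "freq r ST \<le> (r - 3) * (20 choose 5) * (4 * r choose 2)"
proof -
  let ?X = "SIGMA k:{0..r - 4}. {c. c \<subseteq> {0..<4::nat} \<times> window r k \<and> card c = 5} \<times>
    {E. E \<subseteq> deck r \<and> card E = 2}"
  have "freq r ST \<le> card ?X"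
  proof (rule freq_le_card)
    fix s assume s: "s \<in> seven_sets r" "contains_type r ST s"
    then obtain c k where c: "c \<subseteq> s" "card c = 5" "k \<in> {0..r - 4}" "snd ` c = window r k"
      unfolding contains_type_def by (auto simp: is_straight_iff_window)
    have "c \<subseteq> {0..<4} \<times> window r k"
      using c s(1) by (force simp: seven_sets_def deck_def)
    moreover have "card (s - c) = 2" "s - c \<subseteq> deck r"
      using c s(1) by (auto simp: seven_sets_def card_Diff_subset finite_subset)
    ultimately have "(k, c, s - c) \<in> ?X"
      using c by auto
    moreover have "s = c \<union> (s - c)"
      using c(1) by auto
    ultimately show "s \<in> (\<lambda>(k, c, E). c \<union> E) ` ?X"
      by (intro image_eqI[where x = "(k, c, s - c)"]) auto
  qed simp
  also have "card ?X = (r - 3) * (20 choose 5) * (4 * r choose 2)"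
    using assms Suc_diff_le[of 4 r]
    by (simp add: n_subsets card_cartesian_product card_window card_deck add_mult_distrib)
  finally show ?thesis .
qed

lemma freq_ST_le_cubic:
  assumes "5 \<le> r"
  shows "freq r ST \<le> 124032 * r ^ 3"
proof -
  have "2 * (4 * r choose 2) \<le> 2 * (8 * r ^ 2)"
    unfolding choose_two_eq by (simp add: power2_eq_square)
  then have pairs: "4 * r choose 2 \<le> 8 * r ^ 2"
    by linarith
  have "(20 choose 5) = (15504::nat)"
    using choose_five_eq[of 20] by simp
  then have "freq r ST \<le> (r - 3) * 15504 * (4 * r choose 2)"
    using freq_ST_le[OF assms] by simp
  also have "\<dots> \<le> r * 15504 * (8 * r ^ 2)"
    by (intro mult_le_mono pairs) simp_all
  finally show ?thesis
    by (simp add: power2_eq_square power3_eq_cube)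
qed

section \<open>A lower bound for straights\<close>

text \<open>A filling (D, g, E) of the ranks W takes the cards g w \<times> {w} of each rank w in W, with two
  suits for w in D and one otherwise, plus 2 - card D cards E from F: seven cards in all. With
  d = card D there are (5 choose d) * 6 ^ d * 4 ^ (5 - d) * (card F choose (2 - d)) of them.\<close>
definition fillings ::
    "nat set \<Rightarrow> card set \<Rightarrow> (nat set \<times> (nat \<Rightarrow> nat set) \<times> card set) set" where
  "fillings W F = (SIGMA D:{D. D \<subseteq> W \<and> card D \<le> 2}.
     PiE W (\<lambda>w. {T. T \<subseteq> {0..<4} \<and> card T = (if w \<in> D then 2 else 1)}) \<times>
     {E. E \<subseteq> F \<and> card E = 2 - card D})"

definition filled_hand ::
    "nat set \<Rightarrow> nat set \<times> (nat \<Rightarrow> nat set) \<times> card set \<Rightarrow> card set" where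
  "filled_hand W = (\<lambda>(D, g, E). (\<Union>w\<in>W. g w \<times> {w}) \<union> E)"

definition filling_count :: "nat \<Rightarrow> nat" where
  "filling_count m = 1024 * (m choose 2) + 7680 * m + 23040"

lemma sum_subsets_by_card:
  assumes "finite A"
  shows "(\<Sum>D \<in> {D. D \<subseteq> A \<and> card D \<le> n}. f (card D))
    = (\<Sum>d\<le>n. (card A choose d) * f d)"
proof -
  have "(\<Sum>D \<in> {D. D \<subseteq> A \<and> card D \<le> n}. f (card D))
      = (\<Sum>d\<le>n. \<Sum>D \<in> {D \<in> {D. D \<subseteq> A \<and> card D \<le> n}. card D = d}. f (card D))"
    using assms by (intro sum.group[symmetric]) auto
  also have "\<dots> = (\<Sum>d\<le>n. (card A choose d) * f d)"
  proof (rule sum.cong)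
    fix d assume "d \<in> {..n}"
    then have "{D \<in> {D. D \<subseteq> A \<and> card D \<le> n}. card D = d} = {D. D \<subseteq> A \<and> card D = d}"
      by auto
    then show "(\<Sum>D \<in> {D \<in> {D. D \<subseteq> A \<and> card D \<le> n}. card D = d}. f (card D))
        = (card A choose d) * f d"
      using assms by (simp add: n_subsets)
  qed simp
  finally show ?thesis .
qed

lemma finite_fillings: "finite W \<Longrightarrow> finite F \<Longrightarrow> finite (fillings W F)"
  unfolding fillings_def by (intro finite_SigmaI finite_cartesian_product finite_PiE) auto

lemma card_fillings:
  assumes "finite W" "card W = 5" "finite F"
  shows "card (fillings W F) = filling_count (card F)"
proof -
  have suits: "card (PiE W (\<lambda>w. {T. T \<subseteq> {0..<4::nat} \<and> card T = (if w \<in> D then 2 else 1)}))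
      = 6 ^ card D * 4 ^ (5 - card D)" if "D \<subseteq> W" for D
  proof -
    have "card (PiE W (\<lambda>w. {T. T \<subseteq> {0..<4::nat} \<and> card T = (if w \<in> D then 2 else 1)}))
        = (\<Prod>w\<in>W. if w \<in> D then 6 else 4)"
      using assms(1) choose_two_eq[of 4]
      by (simp add: card_PiE n_subsets if_distrib[of "\<lambda>k. 4 choose k"] cong: if_cong)
    also have "\<dots> = 6 ^ card D * 4 ^ (5 - card D)"
      using that assms(1,2)
      by (simp add: prod.If_cases Int_absorb1 card_Diff_subset finite_subset Diff_eq[symmetric])
    finally show ?thesis .
  qed
  have "card (fillings W F)
      = (\<Sum>D \<in> {D. D \<subseteq> W \<and> card D \<le> 2}.
          6 ^ card D * 4 ^ (5 - card D) * (card F choose (2 - card D)))"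
    unfolding fillings_def using assms(1,3)
    by (subst card_SigmaI) (auto simp: card_cartesian_product n_subsets suits intro!: sum.cong finite_PiE)
  also have "\<dots> = (\<Sum>d\<le>2. (5 choose d) * (6 ^ d * 4 ^ (5 - d) * (card F choose (2 - d))))"
    using sum_subsets_by_card[OF assms(1)] assms(2) by (simp add: mult.assoc)
  also have "\<dots> = filling_count (card F)"
    by (simp add: filling_count_def atMost_nat_numeral choose_two choose_one)
  finally show ?thesis .
qed

lemma fillingsD:
  assumes "(D, g, E) \<in> fillings W F"
  shows "D \<subseteq> W" "card D \<le> 2" "g \<in> extensional W" "E \<subseteq> F" "card E = 2 - card D"
    and "\<And>w. w \<in> W \<Longrightarrow> g w \<subseteq> {0..<4} \<and> card (g w) = (if w \<in> D then 2 else 1)"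
  using assms unfolding fillings_def by (auto simp: PiE_iff)

lemma filled_hand_decode:
  assumes "(D, g, E) \<in> fillings W F" "W \<inter> snd ` F = {}"
  defines "h \<equiv> filled_hand W (D, g, E)"
  shows "g = (\<lambda>w\<in>W. {u. (u, w) \<in> h})" and "E = {x \<in> h. snd x \<notin> W}"
    and "D = {w \<in> W. card (g w) = 2}"
proof -
  note fill = fillingsD[OF assms(1)]
  have E_ranks: "snd x \<notin> W" if "x \<in> E" for x
    using that fill(4) assms(2) by auto
  show "g = (\<lambda>w\<in>W. {u. (u, w) \<in> h})"
  proof (rule extensionalityI[OF fill(3)])
    show "g w = (\<lambda>w\<in>W. {u. (u, w) \<in> h}) w" if "w \<in> W" for w
      using that E_ranks unfolding h_def filled_hand_def by fastforce
  qed simp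
  show "E = {x \<in> h. snd x \<notin> W}"
    using E_ranks unfolding h_def filled_hand_def by auto
  show "D = {w \<in> W. card (g w) = 2}"
    using fill(1,6) by (auto split: if_splits)
qed

lemma inj_on_filled_hand:
  assumes "W \<inter> snd ` F = {}"
  shows "inj_on (filled_hand W) (fillings W F)"
proof (rule inj_onI)
  fix x y assume x: "x \<in> fillings W F" and y: "y \<in> fillings W F"
    and eq: "filled_hand W x = filled_hand W y"
  obtain D g E D' g' E' where xy: "x = (D, g, E)" "y = (D', g', E')"
    by (cases x, cases y)
  note decode = filled_hand_decode[OF x[unfolded xy] assms]
    and decode' = filled_hand_decode[OF y[unfolded xy] assms]
  have "g = g'"
    using decode(1) decode'(1) eq xy by simp
  moreover have "E = E'"
    using decode(2) decode'(2) eq xy by simp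
  moreover have "D = D'"
    using decode(3) decode'(3) \<open>g = g'\<close> by simp
  ultimately show "x = y"
    using xy by simp
qed

lemma card_filled_hand:
  assumes "x \<in> fillings W F" "W \<inter> snd ` F = {}" "finite W" "card W = 5" "finite F"
  shows "card (filled_hand W x) = 7"
proof -
  obtain D g E where x: "x = (D, g, E)"
    by (cases x)
  note fill = fillingsD[OF assms(1)[unfolded x]]
  have finite_g: "finite (g w)" if "w \<in> W" for w
    using fill(6)[OF that] by (auto intro: finite_subset)
  have "card (\<Union>w\<in>W. g w \<times> {w}) = (\<Sum>w\<in>W. card (g w \<times> {w}))"
    using assms(3) finite_g by (intro card_UN_disjoint) auto
  also have "\<dots> = (\<Sum>w\<in>W. if w \<in> D then 2 else 1)"
    using fill(6) by (intro sum.cong) (auto simp: card_cartesian_product)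
  also have "\<dots> = 5 + card D"
    using fill(1,2) assms(3,4)
    by (simp add: sum.If_cases Int_absorb1 Diff_eq[symmetric] card_Diff_subset finite_subset)
  finally have card_window_part: "card (\<Union>w\<in>W. g w \<times> {w}) = 5 + card D" .
  have disjoint: "(\<Union>w\<in>W. g w \<times> {w}) \<inter> E = {}"
    using fill(4) assms(2) by force
  have "finite E"
    using fill(4) assms(5) by (rule finite_subset)
  moreover have "finite (\<Union>w\<in>W. g w \<times> {w})"
    using assms(3) finite_g by blast
  ultimately have "card ((\<Union>w\<in>W. g w \<times> {w}) \<union> E) = 5 + card D + card E"
    using card_Un_disjoint[OF _ _ disjoint] card_window_part by simp
  then show ?thesis
    unfolding x filled_hand_def using fill(2,5) by simp
qed

lemma filled_hand_subset:
  assumes "x \<in> fillings W F"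
  shows "filled_hand W x \<subseteq> {0..<4} \<times> W \<union> F"
proof -
  obtain D g E where x: "x = (D, g, E)"
    by (cases x)
  note fill = fillingsD[OF assms[unfolded x]]
  show ?thesis
    unfolding x filled_hand_def using fill(4,6) by blast
qed

lemma ranks_filled_hand:
  assumes "x \<in> fillings W F" "finite F"
  shows "W \<subseteq> snd ` filled_hand W x" "snd ` filled_hand W x - W \<subseteq> snd ` F"
    "card (snd ` filled_hand W x - W) \<le> 2"
proof -
  obtain D g E where x: "x = (D, g, E)"
    by (cases x)
  note fill = fillingsD[OF assms(1)[unfolded x]]
  show "W \<subseteq> snd ` filled_hand W x"
  proof
    fix w assume "w \<in> W"
    then have "g w \<noteq> {}"
      using fill(6)[of w] by (auto split: if_splits)
    then obtain u where "u \<in> g w"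
      by blast
    then show "w \<in> snd ` filled_hand W x"
      using \<open>w \<in> W\<close> unfolding x filled_hand_def by force
  qed
  have outside: "snd ` filled_hand W x - W \<subseteq> snd ` E"
    unfolding x filled_hand_def by auto
  then show "snd ` filled_hand W x - W \<subseteq> snd ` F"
    using fill(4) by auto
  have "finite E"
    using fill(4) assms(2) by (rule finite_subset)
  then have "card (snd ` filled_hand W x - W) \<le> card E"
    using card_mono[OF finite_imageI outside] card_image_le[of E snd] by linarith
  then show "card (snd ` filled_hand W x - W) \<le> 2"
    using fill(5) by linarith
qed

text \<open>Excluding the rank k + 5 is what lets a filled hand determine its window.\<close>
definition free_cards :: "nat \<Rightarrow> nat \<Rightarrow> card set" where
  "free_cards r k = {0..<4} \<times> ({1..r} - window r k - {k + 5})"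

lemma finite_free_cards [simp]: "finite (free_cards r k)"
  by (simp add: free_cards_def)

lemma free_cards_subset_deck: "free_cards r k \<subseteq> deck r"
  by (auto simp: free_cards_def deck_def)

lemma window_Int_free_ranks: "window r k \<inter> snd ` free_cards r k = {}"
  by (auto simp: free_cards_def)

lemma card_free_cards:
  assumes "5 \<le> r" "k \<le> r - 4" "k + 5 \<notin> window r k"
  shows "card (free_cards r k) = (if k + 5 \<le> r then 4 * (r - 6) else 4 * (r - 5))"
proof -
  have "card ({1..r} - window r k) = r - 5"
    using assms window_subset[of r k] by (simp add: card_Diff_subset card_window)
  then have "card ({1..r} - window r k - {k + 5}) = (if k + 5 \<le> r then r - 6 else r - 5)"
    using assms(3) by (simp add: card_Diff_singleton_if)
  then show ?thesis
    by (simp add: free_cards_def card_cartesian_product)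
qed

lemma windows_force_extra_ranks:
  assumes "k < k'" "k' \<le> r - 4" "5 \<le> r" "window r k' \<subseteq> R" "finite R"
  shows "k + 5 \<in> R \<or> 2 < card (R - window r k)"
proof (cases "k' \<le> k + 5")
  case True
  then have "k + 5 \<in> window r k'"
    using assms(1) by (simp add: window_def)
  then show ?thesis
    using assms(4) by blast
next
  case False
  then have "window r k' - {r} \<subseteq> R - window r k"
    using assms(1,4) by (auto simp: window_def)
  moreover have "4 \<le> card (window r k' - {r})"
    using card_window[OF assms(3), of k'] diff_card_le_card_Diff[of "{r}" "window r k'"] by simp
  ultimately show ?thesis
    using card_mono[of "R - window r k" "window r k' - {r}"] assms(5) by simp
qed

lemma straight_filling_ranks:
  assumes "x \<in> fillings (window r k) (free_cards r k)" "k + 5 \<notin> window r k"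
  defines "R \<equiv> snd ` filled_hand (window r k) x"
  shows "window r k \<subseteq> R" "k + 5 \<notin> R" "card (R - window r k) \<le> 2" "finite R"
proof -
  note ranks = ranks_filled_hand[OF assms(1) finite_free_cards]
  show "window r k \<subseteq> R" "card (R - window r k) \<le> 2"
    using ranks unfolding R_def by simp_all
  show "k + 5 \<notin> R"
    using ranks(2) assms(2) unfolding R_def by (auto simp: free_cards_def)
  have "finite (filled_hand (window r k) x)"
    using filled_hand_subset[OF assms(1)] by (rule finite_subset) simp
  then show "finite R"
    unfolding R_def by simp
qed

lemma filled_hand_determines_window:
  assumes "k \<le> r - 4" "k' \<le> r - 4" "5 \<le> r" "k + 5 \<notin> window r k" "k' + 5 \<notin> window r k'"
    and x: "x \<in> fillings (window r k) (free_cards r k)"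
    and x': "x' \<in> fillings (window r k') (free_cards r k')"
    and eq: "filled_hand (window r k) x = filled_hand (window r k') x'"
  shows "k = k'"
proof -
  note R = straight_filling_ranks[OF x assms(4)] and R' = straight_filling_ranks[OF x' assms(5)]
  have same_ranks: "snd ` filled_hand (window r k') x' = snd ` filled_hand (window r k) x"
    using eq by simp
  show ?thesis
  proof (cases k k' rule: linorder_cases)
    case less
    from windows_force_extra_ranks[OF less assms(2,3) R'(1)[unfolded same_ranks] R(4)]
    show ?thesis
      using R(2,3) by linarith
  next
    case greater
    from windows_force_extra_ranks[OF greater assms(1,3) R(1)[folded same_ranks] R'(4)]
    show ?thesis
      using R'(2,3) by linarith
  qed
qed

lemma straight_filled_hand:
  assumes "x \<in> fillings (window r k) (free_cards r k)" "k \<le> r - 4" "5 \<le> r"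
  shows "filled_hand (window r k) x \<in> seven_sets r \<and> contains_type r ST (filled_hand (window r k) x)"
proof -
  let ?h = "filled_hand (window r k) x"
  have "{0..<4} \<times> window r k \<subseteq> deck r"
    using window_subset[OF assms(3,2)] by (auto simp: deck_def)
  then have "?h \<subseteq> deck r"
    using filled_hand_subset[OF assms(1)] free_cards_subset_deck by blast
  moreover have "card ?h = 7"
    using card_filled_hand[OF assms(1) window_Int_free_ranks] assms(3) by (simp add: card_window)
  moreover have "contains_type r ST ?h"
  proof -
    obtain c where c: "c \<subseteq> ?h" "inj_on snd c" "window r k = snd ` c"
      using ranks_filled_hand(1)[OF assms(1) finite_free_cards] by (auto simp: subset_image_inj)
    then have "card c = 5"
      using card_image[OF c(2)] card_window[OF assms(3), of k] by argo
    moreover have "is_straight r c"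
      unfolding is_straight_iff_window using c(3) assms(2) by (intro bexI[of _ k]) auto
    ultimately show ?thesis
      unfolding contains_type_def using c(1) by auto
  qed
  ultimately show ?thesis
    by (simp add: seven_sets_def)
qed

lemma sum_filling_count_le_freq_ST:
  assumes "K \<subseteq> {0..r - 4}" "5 \<le> r" "\<And>k. k \<in> K \<Longrightarrow> k + 5 \<notin> window r k"
  shows "(\<Sum>k\<in>K. filling_count (card (free_cards r k))) \<le> freq r ST"
proof -
  let ?X = "SIGMA k:K. fillings (window r k) (free_cards r k)"
  have "finite K"
    using assms(1) by (rule finite_subset) simp
  then have "(\<Sum>k\<in>K. filling_count (card (free_cards r k))) = card ?X"
    using assms(2) by (simp add: finite_fillings card_fillings card_window)
  also have "\<dots> \<le> freq r ST"
  proof (rule card_le_freq[where f = "\<lambda>(k, x). filled_hand (window r k) x"])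
    show "inj_on (\<lambda>(k, x). filled_hand (window r k) x) ?X"
    proof (rule inj_onI, clarify)
      fix k x k' x'
      assume k: "k \<in> K" "x \<in> fillings (window r k) (free_cards r k)"
        and k': "k' \<in> K" "x' \<in> fillings (window r k') (free_cards r k')"
        and eq: "filled_hand (window r k) x = filled_hand (window r k') x'"
      have "k \<le> r - 4" "k' \<le> r - 4"
        using k(1) k'(1) assms(1) by auto
      then have "k = k'"
        using filled_hand_determines_window assms(2,3) k k' eq by blast
      then show "k = k' \<and> x = x'"
        using inj_on_filled_hand[OF window_Int_free_ranks] k(2) k'(2) eq by (auto dest: inj_onD)
    qed
  next
    fix y assume "y \<in> ?X"
    then obtain k x where "y = (k, x)" "k \<in> K" "x \<in> fillings (window r k) (free_cards r k)"
      by auto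
    then show "(\<lambda>(k, x). filled_hand (window r k) x) y \<in> seven_sets r \<and>
        contains_type r ST ((\<lambda>(k, x). filled_hand (window r k) x) y)"
      using straight_filled_hand[of x r k] assms(1,2) by auto
  qed
  finally show ?thesis .
qed

lemma freq_ST_ge:
  assumes "6 \<le> r"
  shows "(r - 4) * filling_count (4 * (r - 6)) + filling_count (4 * (r - 5)) \<le> freq r ST"
proof -
  have "k + 5 \<notin> window r k" for k
    using assms by (simp add: window_def)
  then have "(\<Sum>k\<in>{0..r - 4}. filling_count (card (free_cards r k))) \<le> freq r ST"
    using assms by (intro sum_filling_count_le_freq_ST) auto
  moreover have "{0..r - 4} = insert (r - 4) {0..<r - 4}"
    by auto
  moreover have "card (free_cards r k) = 4 * (r - 6)" if "k < r - 4" for k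
    using that assms card_free_cards[of r k] by (simp add: window_def)
  moreover have "card (free_cards r (r - 4)) = 4 * (r - 5)"
    using assms card_free_cards[of r "r - 4"] by (simp add: window_def)
  ultimately show ?thesis
    by simp
qed

text \<open>For r = 5 the ace-low window coincides with window 1.\<close>
lemma freq_ST_ge_5: "filling_count 0 \<le> freq 5 ST"
proof -
  have "(\<Sum>k\<in>{1}. filling_count (card (free_cards 5 k))) \<le> freq 5 ST"
    by (rule sum_filling_count_le_freq_ST) (auto simp: window_def)
  moreover have "card (free_cards 5 1) = 0"
    using card_free_cards[of 5 1] by (simp add: window_def)
  ultimately show ?thesis
    by simp
qed

section \<open>Full houses and flushes\<close>

lemma is_type_FH_imp:
  assumes "is_type r FH c" "h \<in> {HC, P1, P2, X3}"
  shows "is_type r h c"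
proof -
  obtain a b where ab: "a \<noteq> b" "3 \<le> rank_count c a" "2 \<le> rank_count c b"
    using assms(1) by auto
  have "finite {x \<in> c. snd x = a}"
    using ab(2) unfolding rank_count_def by (intro card_ge_0_finite) linarith
  then obtain x y where xy: "x \<in> c" "y \<in> c" "x \<noteq> y" "snd x = snd y"
    using ab(2) card_le_Suc0_iff_eq[of "{x \<in> c. snd x = a}"] unfolding rank_count_def by auto
  have "is_type r P1 c"
    unfolding is_type.simps using xy by blast
  moreover have "is_type r P2 c"
    unfolding is_type.simps using ab by (intro disjI1 exI[of _ a] exI[of _ b]) simp
  moreover have "is_type r X3 c"
    unfolding is_type.simps using ab(2) by blast
  ultimately show ?thesis
    using assms(2) by (auto simp only: insert_iff empty_iff is_type.simps(1))
qed

lemma freq_FH_le: "h \<in> {HC, P1, P2, X3} \<Longrightarrow> freq r FH \<le> freq r h"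
  by (rule freq_mono) (erule is_type_FH_imp, assumption)

lemma full_house_hand:
  assumes "R \<subseteq> {1..r}" "card R = 4"
  defines "s \<equiv> {0::nat} \<times> R \<union> {1, 2} \<times> {Min R} \<union> {(1, Max R)}"
  shows "s \<in> seven_sets r" "contains_type r FH s" "snd ` s = R"
proof -
  have fin: "finite R" and ne: "R \<noteq> {}"
    using assms(1,2) by (auto intro: finite_subset)
  have min_max: "Min R \<in> R" "Max R \<in> R" "Min R < Max R"
  proof -
    show "Min R \<in> R" "Max R \<in> R"
      using fin ne by simp_all
    have "\<not> R \<subseteq> {Min R}"
      using assms(2) card_mono[of "{Min R}" R] by auto
    then obtain x where "x \<in> R" "x \<noteq> Min R"
      by blast
    then show "Min R < Max R"
      using fin Min_le[of R x] Max_ge[of R x] by linarith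
  qed
  have "card ({0::nat} \<times> R \<union> {1, 2} \<times> {Min R}) = 6"
    using assms(2) fin by (subst card_Un_disjoint) (auto simp: card_cartesian_product)
  then have "card s = 7"
    unfolding s_def using fin min_max by (subst card_Un_disjoint) auto
  moreover have "s \<subseteq> deck r"
    unfolding s_def using assms(1) min_max by (auto simp: deck_def)
  ultimately show "s \<in> seven_sets r"
    by (simp add: seven_sets_def)
  let ?c = "{0::nat, 1, 2} \<times> {Min R} \<union> {0, 1} \<times> {Max R}"
  have "card ?c = 5"
    using min_max by (subst card_Un_disjoint) (auto simp: card_cartesian_product)
  moreover have "is_type r FH ?c"
  proof -
    have "{x \<in> ?c. snd x = Min R} = {0, 1, 2} \<times> {Min R}"
      and "{x \<in> ?c. snd x = Max R} = {0, 1} \<times> {Max R}"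
      using min_max by auto
    then show ?thesis
      unfolding is_type.simps rank_count_def using min_max
      by (intro exI[of _ "Min R"] exI[of _ "Max R"]) (simp add: card_cartesian_product)
  qed
  moreover have "?c \<subseteq> s"
    unfolding s_def using min_max by auto
  ultimately show "contains_type r FH s"
    unfolding contains_type_def by blast
  show "snd ` s = R"
    unfolding s_def using min_max by (auto simp: image_Un)
qed

lemma freq_FH_ge: "r choose 4 \<le> freq r FH"
proof -
  let ?f = "\<lambda>R. {0::nat} \<times> R \<union> {1, 2} \<times> {Min R} \<union> {(1, Max R)}"
  let ?X = "{R. R \<subseteq> {1..r} \<and> card R = 4}"
  have "card ?X \<le> freq r FH"
  proof (rule card_le_freq)
    show "inj_on ?f ?X"
      by (rule inj_on_inverseI[where g = "image snd"]) (use full_house_hand(3) in blast)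
    show "?f R \<in> seven_sets r \<and> contains_type r FH (?f R)" if "R \<in> ?X" for R
      using that full_house_hand(1,2) by blast
  qed
  then show ?thesis
    by (simp add: n_subsets)
qed

lemma freq_FL_ge:
  assumes "2 \<le> r"
  shows "r choose 5 \<le> freq r FL"
proof -
  let ?f = "\<lambda>R. {0::nat} \<times> R \<union> {(1, 1), (1, 2::nat)}"
  let ?X = "{R. R \<subseteq> {1..r} \<and> card R = 5}"
  have "card ?X \<le> freq r FL"
  proof (rule card_le_freq)
    have "{x \<in> ?f R. fst x = 0} = {0} \<times> R" for R
      by auto
    then have decode: "snd ` {x \<in> ?f R. fst x = 0} = R" for R
      by simp
    show "inj_on ?f ?X"
      by (rule inj_on_inverseI[where g = "\<lambda>s. snd ` {x \<in> s. fst x = 0}"]) (simp only: decode)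
  next
    fix R assume R: "R \<in> ?X"
    then have "card ({0::nat} \<times> R) = 5"
      by (simp add: card_cartesian_product)
    moreover have "is_flush ({0::nat} \<times> R)"
      by (simp add: is_flush_def)
    moreover have "finite R"
      using R by (auto intro: finite_subset)
    then have "card (?f R) = 7"
      using R by (subst card_Un_disjoint) (auto simp: card_cartesian_product)
    moreover have "?f R \<subseteq> deck r"
      using R assms by (auto simp: deck_def)
    ultimately show "?f R \<in> seven_sets r \<and> contains_type r FL (?f R)"
      unfolding seven_sets_def contains_type_def is_type.simps by blast
  qed
  then show ?thesis
    by (simp add: n_subsets)
qed

section \<open>Large decks\<close>

lemma freq_X4_ge_quartic:
  assumes "2 \<le> r"
  shows "r ^ 4 \<le> 6 * freq r X4"
proof -
  have "r * r * r * r \<le> r * (4 * r - 4) * (4 * r - 4 - 1) * (4 * r - 4 - 2)"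
    using assms by (intro mult_le_mono) auto
  also have "\<dots> = r * (6 * (4 * r - 4 choose 3))"
    by (simp only: choose_three_eq mult.assoc)
  also have "\<dots> = 6 * freq r X4"
    by (simp add: freq_X4)
  finally show ?thesis
    by (simp add: power4_eq_xxxx)
qed

lemma freq_FH_ge_quartic:
  assumes "6 \<le> r"
  shows "r ^ 4 \<le> 192 * freq r FH"
proof -
  have "r * r * r * r \<le> r * (2 * (r - 1)) * (2 * (r - 2)) * (2 * (r - 3))"
    using assms by (intro mult_le_mono) auto
  also have "\<dots> = 8 * (r * (r - 1) * (r - 2) * (r - 3))"
    by (simp add: algebra_simps)
  also have "\<dots> = 192 * (r choose 4)"
    by (simp only: choose_four_eq[symmetric])
  also have "\<dots> \<le> 192 * freq r FH"
    using freq_FH_ge by simp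
  finally show ?thesis
    by (simp add: power4_eq_xxxx)
qed

lemma freq_FL_ge_quintic:
  assumes "8 \<le> r"
  shows "r ^ 5 \<le> 1920 * freq r FL"
proof -
  have "r ^ 5 = r * r * r * r * r"
    by (simp add: numeral_eq_Suc)
  also have "\<dots> \<le> r * (2 * (r - 1)) * (2 * (r - 2)) * (2 * (r - 3)) * (2 * (r - 4))"
    using assms by (intro mult_le_mono) auto
  also have "\<dots> = 16 * (r * (r - 1) * (r - 2) * (r - 3) * (r - 4))"
    by (simp add: algebra_simps)
  also have "\<dots> = 1920 * (r choose 5)"
    by (simp only: choose_five_eq[symmetric])
  also have "\<dots> \<le> 1920 * freq r FL"
    using freq_FL_ge assms by simp
  finally show ?thesis .
qed

lemma less_by_growth:
  fixes a b c K r j :: nat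
  assumes "a \<le> K * r ^ 3" "r ^ (j + 3) \<le> c * b" "c * K < r ^ j" "0 < r"
  shows "a < b"
proof -
  have "c * a \<le> c * K * r ^ 3"
    using assms(1) by simp
  also have "\<dots> < r ^ j * r ^ 3"
    using assms(3,4) by (intro mult_strict_right_mono) simp_all
  also have "\<dots> \<le> c * b"
    using assms(2) by (simp add: power_add)
  finally show ?thesis
    by simp
qed

lemma straights_rarest_large:
  assumes "10 ^ 8 \<le> r"
  shows "straights_rarest r"
proof -
  have r: "0 < r" "5 \<le> r" "8 \<le> r"
    using assms by simp_all
  note ST = freq_ST_le_cubic[OF r(2)]
  have "r ^ (1 + 3) \<le> 6 * freq r X4"
    using freq_X4_ge_quartic r by simp
  from less_by_growth[OF ST this _ r(1)] have X4: "freq r ST < freq r X4"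
    using assms by simp
  have "r ^ (1 + 3) \<le> 192 * freq r FH"
    using freq_FH_ge_quartic r by simp
  from less_by_growth[OF ST this _ r(1)] have FH: "freq r ST < freq r FH"
    using assms by simp
  have FL_growth: "r ^ (2 + 3) \<le> 1920 * freq r FL"
    using freq_FL_ge_quintic r by simp
  have "(10 ^ 8) ^ 2 \<le> r ^ 2"
    using assms by (rule power_mono) simp
  then have "1920 * 124032 < r ^ 2"
    by simp
  from less_by_growth[OF ST FL_growth this r(1)] have FL: "freq r ST < freq r FL" .
  have "freq r ST < freq r h" if "h \<in> {HC, P1, P2, X3}" for h
    using FH freq_FH_le[OF that, of r] by linarith
  then show ?thesis
    unfolding straights_rarest_def using FL FH X4 by auto
qed

section \<open>Small decks\<close>

text \<open>The polynomial is 6 times the lower bound of \<open>freq_ST_ge\<close> minus 6 times \<open>freq r X4\<close>;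
  it changes sign between 760 and 761.\<close>
lemma straight_margin_nonneg:
  fixes r :: int
  assumes "6 \<le> r" "r \<le> 760"
  shows "0 \<le> - 64 * r ^ 4 + 49392 * r ^ 3 - 565544 * r ^ 2 + 2227320 * r - 2995200"
proof -
  have "list_all (\<lambda>r::int. 0 \<le> - 64 * r ^ 4 + 49392 * r ^ 3 - 565544 * r ^ 2 + 2227320 * r - 2995200)
      [6..760]"
    by code_simp
  moreover have "r \<in> set [6..760]"
    using assms by (simp only: set_upto atLeastAtMost_iff)
  ultimately show ?thesis
    unfolding list_all_iff by blast
qed

lemma int_filling_count: "int (filling_count m) = 512 * (int m * (int m - 1)) + 7680 * int m + 23040"
proof -
  have "int (2 * (m choose 2)) = int (m * (m - 1))"
    by (simp only: choose_two_eq)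
  then have "2 * int (m choose 2) = int m * (int m - 1)"
    by (cases m) (simp_all add: algebra_simps)
  then show ?thesis
    by (simp add: filling_count_def)
qed

lemma int_freq_X4:
  assumes "2 \<le> r"
  shows "6 * int (freq r X4) = int r * ((4 * int r - 4) * (4 * int r - 5) * (4 * int r - 6))"
proof -
  have "6 * freq r X4 = r * (6 * (4 * r - 4 choose 3))"
    by (simp add: freq_X4)
  also have "\<dots> = r * ((4 * r - 4) * (4 * r - 4 - 1) * (4 * r - 4 - 2))"
    by (simp only: choose_three_eq)
  finally have "int (6 * freq r X4) = int (r * ((4 * r - 4) * (4 * r - 5) * (4 * r - 6)))"
    by simp
  then show ?thesis
    using assms by simp
qed

lemma freq_X4_le_freq_ST:
  assumes "5 \<le> r" "r \<le> 760"
  shows "freq r X4 \<le> freq r ST"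
proof (cases "r = 5")
  case True
  have "freq 5 X4 = 2800"
    using choose_three_eq[of 16] by (simp add: freq_X4)
  then show ?thesis
    using True freq_ST_ge_5 by (simp add: filling_count_def)
next
  case False
  then have r: "6 \<le> r"
    using assms(1) by simp
  define x where "x = int r"
  let ?L = "(r - 4) * filling_count (4 * (r - 6)) + filling_count (4 * (r - 5))"
  have "int (4 * (r - 6)) = 4 * x - 24" "int (4 * (r - 5)) = 4 * x - 20" "int (r - 4) = x - 4"
    using r by (simp_all add: x_def)
  then have "6 * int ?L - 6 * int (freq r X4)
      = 6 * ((x - 4) * (512 * ((4 * x - 24) * (4 * x - 24 - 1)) + 7680 * (4 * x - 24) + 23040)
          + (512 * ((4 * x - 20) * (4 * x - 20 - 1)) + 7680 * (4 * x - 20) + 23040))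
        - x * ((4 * x - 4) * (4 * x - 5) * (4 * x - 6))"
    using r by (simp add: int_filling_count int_freq_X4 x_def)
  also have "\<dots> = - 64 * x ^ 4 + 49392 * x ^ 3 - 565544 * x ^ 2 + 2227320 * x - 2995200"
    by algebra
  also have "\<dots> \<ge> 0"
    using straight_margin_nonneg r assms(2) by (simp add: x_def)
  finally have "6 * int (freq r X4) \<le> 6 * int ?L"
    by (simp only: diff_ge_0_iff_ge)
  then have "freq r X4 \<le> ?L"
    by (simp only: mult_le_cancel_left_pos zero_less_numeral of_nat_le_iff)
  also have "\<dots> \<le> freq r ST"
    by (rule freq_ST_ge[OF r])
  finally show ?thesis .
qed

theorem fact2:
  shows "(\<exists>N. \<forall>r\<ge>N. straights_rarest r) \<and>
         (\<forall>r::nat. r \<ge> 5 \<longrightarrow> straights_rarest r \<longrightarrow> r \<ge> 761)"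
proof
  show "\<exists>N. \<forall>r\<ge>N. straights_rarest r"
    using straights_rarest_large by blast
  show "\<forall>r::nat. r \<ge> 5 \<longrightarrow> straights_rarest r \<longrightarrow> r \<ge> 761"
  proof (intro allI impI)
    fix r :: nat
    assume "5 \<le> r" "straights_rarest r"
    then have "freq r ST < freq r X4"
      by (simp add: straights_rarest_def)
    then show "761 \<le> r"
      using freq_X4_le_freq_ST[OF \<open>5 \<le> r\<close>] by (cases "r \<le> 760") simp_all
  qed
qed

end
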